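(* Assume Assumption (S) and the upwind condition $A_{i,0}=0$ for all $i$, and let $\mathbb D^*:\mathbb V^k\to\mathbb V^k$ be defined by $(\mathbb D^*v,\omega)_*=\tau\mathcal H^*(v,\omega)$ for all $\omega\in\mathbb V^k$. Then: (1) (skew-symmetry) $(\mathbb D^*v,\omega)_*+(v,\mathbb D^*\omega)_*=-\tau\beta\langle[\![v]\!],[\![\omega]\!]\rangle$ for all $v,\omega\in\mathbb V^k$; (2) (non-positivity) for every symmetric positive semi-definite matrix $(\theta_{\kappa,\kappa_0})$ and every family $\{v_\kappa\}\subset\mathbb V^k$, $\sum_{\kappa,\kappa_0}\theta_{\kappa,\kappa_0}(\mathbb D^*v_\kappa,v_{\kappa_0})_*=-\frac{\tau\beta}{2}\sum_{\kappa,\kappa_0}\theta_{\kappa,\kappa_0}\langle[\![v_\kappa]\!],[\![v_{\kappa_0}]\!]\rangle\le0$; (3) (weak boundedness) $(\mathbb D^*v,\omega)_*\le C\frac{\tau}{h}\|v\|_*\|\omega\|_*$ for all $v,\omega\in\mathbb V^k$, with $C$ independent of $\tau,h$.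
   Context: Let $\Omega=[a,b]$ be partitioned into finitely many cells $I_i=[x_{i-\frac12},x_{i+\frac12}]$ with sizes $h_i$, $h=\max_ih_i$, quasi-uniform ($h\le Ch_i$, fixed $C$); indices periodic. $(\cdot,\cdot)$: $L^2(\Omega)$ inner product; $(\cdot,\cdot)_{I_i}$: $L^2(I_i)$ inner product. $\mathbb V^k=\{v\in L^2(\Omega): v|_{I_i}\in\mathbb P^k(I_i)\ \forall i\}$. Each $I_i$ has subdivision points $x_{i-\frac12}=x_{i,0}<x_{i,1}<\dots<x_{i,k}<x_{i,k+1}=x_{i+\frac12}$, control volumes $I_{i,j}=[x_{i,j},x_{i,j+1}]$; $\mathbb V^{k,*}$ = functions constant on each $I_{i,j}$. Quadrature on $I_i$: $Q_i^k(v)=\sum_{j=0}^{k+1}A_{i,j}v(x_{i,j})$ (applied to restrictions to $I_i$), error $R_i^k(v)=\int_{I_i}v\,dx-Q_i^k(v)$, exact on $\mathbb P^{k-1}(I_i)$. $M^*:\mathbb V^k\to\mathbb V^{k,*}$: for $v=\omega|_{I_i}$, $(M^*\omega)|_{I_{i,0}}=v(x_{i-\frac12})+A_{i,0}v'(x_{i-\frac12})$, $(M^*\omega)|_{I_{i,j}}-(M^*\omega)|_{I_{i,j-1}}=A_{i,j}v'(x_{i,j})$, $j=1,\dots,k$. $L_{i,\ell}$: shifted Legendre polynomial of degree $\ell$ on $I_i$, $L_{i,\ell}(x_{i+\frac12})=1$, $(L_{i,\ell},L_{i,m})_{I_i}=\delta_{\ell m}h_i/(2\ell+1)$. Assumption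 (S): $k\ge1$ and for every $i$, $R_i^k$ vanishes on $\mathbb P^{2k-1}(I_i)$ and $\frac{h_i}{2k-1}-Q_i^k(L_{i,k+1}L_{i,k-1})>0$; then $(v,\omega)_*:=(v,M^*\omega)$ is an inner product on $\mathbb V^k$, $\|v\|_*=\sqrt{(v,v)_*}$. Jumps $[\![v]\!]_{i+\frac12}=v(x_{i+\frac12}^+)-v(x_{i+\frac12}^-)$, $\langle[\![v]\!],[\![\omega]\!]\rangle=\sum_i[\![v]\!]_{i+\frac12}[\![\omega]\!]_{i+\frac12}$. With $A_{i,0}=0$, for $v,\omega\in\mathbb V^k$: $\mathcal H^*(v,\omega)=\beta\big(\sum_iQ_i^k(v\omega_x)+\sum_iv(x_{i+\frac12}^-)[\![\omega]\!]_{i+\frac12}\big)$, $\beta>0$ constant; $\tau>0$ is the time step. *)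

theory Defs
  imports "HOL-Analysis.Analysis" "HOL-Computational_Algebra.Polynomial"
begin

text \<open>Legendre polynomials on [-1,1] (Bonnet recursion), normalised by P_n(1) = 1.\<close>
fun legendre :: "nat \<Rightarrow> real poly" where
  "legendre 0 = 1"
| "legendre (Suc 0) = [:0, 1:]"
| "legendre (Suc (Suc n)) =
     smult ((2 * real n + 3) / (real n + 2)) ([:0, 1:] * legendre (Suc n))
     - smult ((real n + 1) / (real n + 2)) (legendre n)"

definition shleg :: "real \<Rightarrow> real \<Rightarrow> nat \<Rightarrow> real \<Rightarrow> real" where
  "shleg c d l t = poly (legendre l) (2 * (t - c) / (d - c) - 1)"

definition quad :: "nat \<Rightarrow> (nat \<Rightarrow> real) \<Rightarrow> (nat \<Rightarrow> real) \<Rightarrow> (real \<Rightarrow> real) \<Rightarrow> real" where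
  "quad k nd wt f = (\<Sum>j\<le>Suc k. wt j * f (nd j))"

definition valid_nodes :: "nat \<Rightarrow> real \<Rightarrow> real \<Rightarrow> (nat \<Rightarrow> real) \<Rightarrow> bool" where
  "valid_nodes k c d nd \<longleftrightarrow> nd 0 = c \<and> nd (Suc k) = d \<and> (\<forall>j\<le>k. nd j < nd (Suc j))"

definition assumption_S :: "nat \<Rightarrow> real \<Rightarrow> real \<Rightarrow> (nat \<Rightarrow> real) \<Rightarrow> (nat \<Rightarrow> real) \<Rightarrow> bool" where
  "assumption_S k c d nd wt \<longleftrightarrow> 1 \<le> k \<and>
     (\<forall>p :: real poly. degree p \<le> 2 * k - 1 \<longrightarrow>
         integral {c..d} (poly p) - quad k nd wt (poly p) = 0) \<and>
     (d - c) / (2 * real k - 1)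
        - quad k nd wt (\<lambda>t. shleg c d (k + 1) t * shleg c d (k - 1) t) > 0"

text \<open>Mesh: cells I_i = [x i, x (i+1)], i < N. The quadrature on cell i is the affine image
  of a reference rule (nodes xi, weights w) on [0,1].\<close>
definition cnode :: "(nat \<Rightarrow> real) \<Rightarrow> (nat \<Rightarrow> real) \<Rightarrow> nat \<Rightarrow> nat \<Rightarrow> real" where
  "cnode x xi i j = x i + xi j * (x (Suc i) - x i)"

definition cweight :: "(nat \<Rightarrow> real) \<Rightarrow> (nat \<Rightarrow> real) \<Rightarrow> nat \<Rightarrow> nat \<Rightarrow> real" where
  "cweight x w i j = w j * (x (Suc i) - x i)"

definition meshsize :: "nat \<Rightarrow> (nat \<Rightarrow> real) \<Rightarrow> real" where
  "meshsize N x = Max ((\<lambda>i. x (Suc i) - x i) ` {..<N})"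

text \<open>Elements of V^k are represented by their restrictions to the cells.\<close>
definition Vk :: "nat \<Rightarrow> nat \<Rightarrow> (nat \<Rightarrow> real poly) \<Rightarrow> bool" where
  "Vk N k v \<longleftrightarrow> (\<forall>i<N. degree (v i) \<le> k)"

text \<open>Value of M^* omega on control volume I_{i,j}, j = 0..k.\<close>
definition Mstar :: "(nat \<Rightarrow> real) \<Rightarrow> (nat \<Rightarrow> real) \<Rightarrow> (nat \<Rightarrow> real) \<Rightarrow> (nat \<Rightarrow> real poly)
    \<Rightarrow> nat \<Rightarrow> nat \<Rightarrow> real" where
  "Mstar x xi w om i j = poly (om i) (x i)
     + (\<Sum>l\<le>j. cweight x w i l * poly (pderiv (om i)) (cnode x xi i l))"

text \<open>(v, omega)_* = (v, M^* omega).\<close>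
definition star_ip :: "nat \<Rightarrow> nat \<Rightarrow> (nat \<Rightarrow> real) \<Rightarrow> (nat \<Rightarrow> real) \<Rightarrow> (nat \<Rightarrow> real)
    \<Rightarrow> (nat \<Rightarrow> real poly) \<Rightarrow> (nat \<Rightarrow> real poly) \<Rightarrow> real" where
  "star_ip N k x xi w v om = (\<Sum>i<N. \<Sum>j\<le>k. Mstar x xi w om i j *
      integral {cnode x xi i j .. cnode x xi i (Suc j)} (poly (v i)))"

definition star_norm :: "nat \<Rightarrow> nat \<Rightarrow> (nat \<Rightarrow> real) \<Rightarrow> (nat \<Rightarrow> real) \<Rightarrow> (nat \<Rightarrow> real)
    \<Rightarrow> (nat \<Rightarrow> real poly) \<Rightarrow> real" where
  "star_norm N k x xi w v = sqrt (star_ip N k x xi w v v)"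

text \<open>Periodic jump at x_{i+1/2}: v(x^+) - v(x^-).\<close>
definition jump :: "nat \<Rightarrow> (nat \<Rightarrow> real) \<Rightarrow> (nat \<Rightarrow> real poly) \<Rightarrow> nat \<Rightarrow> real" where
  "jump N x v i = poly (v (Suc i mod N)) (x (Suc i mod N)) - poly (v i) (x (Suc i))"

definition jump_ip :: "nat \<Rightarrow> (nat \<Rightarrow> real) \<Rightarrow> (nat \<Rightarrow> real poly) \<Rightarrow> (nat \<Rightarrow> real poly) \<Rightarrow> real" where
  "jump_ip N x v om = (\<Sum>i<N. jump N x v i * jump N x om i)"

text \<open>H^*(v, omega) (upwind case A_{i,0} = 0).\<close>
definition Hstar :: "nat \<Rightarrow> nat \<Rightarrow> (nat \<Rightarrow> real) \<Rightarrow> (nat \<Rightarrow> real) \<Rightarrow> (nat \<Rightarrow> real) \<Rightarrow> real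
    \<Rightarrow> (nat \<Rightarrow> real poly) \<Rightarrow> (nat \<Rightarrow> real poly) \<Rightarrow> real" where
  "Hstar N k x xi w \<beta> v om = \<beta> *
     ((\<Sum>i<N. \<Sum>j\<le>Suc k. cweight x w i j *
         (poly (v i) (cnode x xi i j) * poly (pderiv (om i)) (cnode x xi i j)))
      + (\<Sum>i<N. poly (v i) (x (Suc i)) * jump N x om i))"

end

(*
  On a single cell, pulled back to [0, 1], summation by parts and the exactness of the
  quadrature on P^(2k-1) give

    (p, q)_* = int_0^1 p q + k / (k + 1) * rho * lc p * lc q,

  where rho is the quadrature error of t^(2k) and lc p is the coefficient of t^k in p.
  Hence (.,.)_* is symmetric, and in the shifted Legendre basis it is diagonal with weights
  1 / (2l + 1) for l < k and gamma for l = k.  Assumption (S) says exactly that gamma > 0, so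
  (.,.)_* is positive definite and, P^k being finite dimensional, it bounds the values of p
  and p' at the quadrature nodes.

  Exactness also gives Q(p q') + Q(q p') = [p q] evaluated from 0 to 1 on each cell, and the
  cell boundary terms together with the upwind fluxes telescope around the periodic mesh to
  minus the jump term; this is the skew-symmetry.  Non-positivity follows by symmetrising the
  double sum and applying the semidefiniteness of theta interface by interface.  Weak
  boundedness follows from the node bounds, Cauchy-Schwarz over the cells and h_i >= h / Cq.
*)

theory Submission
  imports Defs
begin

lemma pderiv_sum: "pderiv (sum f A) = (\<Sum>x\<in>A. pderiv (f x))"
  using higher_pderiv_sum[of 1 f A] by simp

lemma coeff_mult_degree_bounds:
  fixes p q :: "'a::comm_semiring_0 poly"
  assumes "degree p \<le> a" "degree q \<le> b"
  shows "coeff (p * q) (a + b) = coeff p a * coeff q b"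
proof (cases "degree p = a \<and> degree q = b")
  case True
  then show ?thesis using coeff_mult_degree_sum[of p q] by simp
next
  case False
  then have "degree (p * q) < a + b"
    using assms degree_mult_le[of p q] by linarith
  with False assms show ?thesis
    by (auto simp: coeff_eq_0 le_less)
qed

lemma sum_by_parts_partial_sums:
  fixes c :: "'a::comm_ring"
  shows "(\<Sum>j\<le>n. (c + (\<Sum>l\<le>j. d l)) * (V j - V (Suc j))) =
     c * V 0 + (\<Sum>j\<le>n. d j * V j) - (c + (\<Sum>l\<le>n. d l)) * V (Suc n)"
  by (induction n) (simp_all add: algebra_simps)

lemma sum_lessThan_Suc_mod:
  assumes "0 < N"
  shows "(\<Sum>i<N. f (Suc i mod N)) = (\<Sum>i<N. f i)"
proof -
  obtain M where N: "N = Suc M"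
    using assms by (cases N) auto
  have "(\<Sum>i<Suc M. f (Suc i mod Suc M)) = f 0 + (\<Sum>i<M. f (Suc i))"
    by (simp add: lessThan_Suc)
  also have "\<dots> = (\<Sum>i<Suc M. f i)"
    by (simp only: sum.lessThan_Suc_shift)
  finally show ?thesis
    by (simp add: N)
qed

lemma abs_mult_le_of_abs_le:
  fixes x y :: "'a::linordered_idom"
  shows "\<bar>x\<bar> \<le> X \<Longrightarrow> \<bar>y\<bar> \<le> Y \<Longrightarrow> \<bar>x * y\<bar> \<le> X * Y"
  by (simp add: abs_mult mult_mono')

lemma abs_sum_mult_le_L2_set: "\<bar>\<Sum>i\<in>A. f i * g i\<bar> \<le> L2_set f A * L2_set g A"
  using sum_abs[of "\<lambda>i. f i * g i" A] L2_set_mult_ineq[of f g A] by (simp add: abs_mult)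

lemma double_sum_skew_part:
  fixes \<theta> s J :: "'a \<Rightarrow> 'a \<Rightarrow> real"
  assumes sym: "\<And>a b. a \<in> A \<Longrightarrow> b \<in> A \<Longrightarrow> \<theta> a b = \<theta> b a"
    and skew: "\<And>a b. a \<in> A \<Longrightarrow> b \<in> A \<Longrightarrow> s a b + s b a = c * J a b"
  shows "(\<Sum>a\<in>A. \<Sum>b\<in>A. \<theta> a b * s a b) = c / 2 * (\<Sum>a\<in>A. \<Sum>b\<in>A. \<theta> a b * J a b)"
proof -
  have "(\<Sum>a\<in>A. \<Sum>b\<in>A. \<theta> a b * s a b) = (\<Sum>a\<in>A. \<Sum>b\<in>A. \<theta> a b * s b a)"
    by (subst sum.swap) (intro sum.cong refl; simp add: sym)
  then have "2 * (\<Sum>a\<in>A. \<Sum>b\<in>A. \<theta> a b * s a b) = (\<Sum>a\<in>A. \<Sum>b\<in>A. \<theta> a b * (s a b + s b a))"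
    by (simp add: distrib_left sum.distrib)
  also have "\<dots> = c * (\<Sum>a\<in>A. \<Sum>b\<in>A. \<theta> a b * J a b)"
    by (simp add: skew sum_distrib_left ac_simps cong: sum.cong)
  finally show ?thesis
    by simp
qed

lemma psd_double_sum_gram_nonneg:
  fixes \<theta> :: "'a \<Rightarrow> 'a \<Rightarrow> real"
  assumes psd: "\<And>c. 0 \<le> (\<Sum>a\<in>A. \<Sum>b\<in>A. \<theta> a b * c a * c b)"
  shows "0 \<le> (\<Sum>a\<in>A. \<Sum>b\<in>A. \<theta> a b * (\<Sum>i\<in>I. f a i * f b i))"
proof -
  have "(\<Sum>a\<in>A. \<Sum>b\<in>A. \<theta> a b * (\<Sum>i\<in>I. f a i * f b i))
      = (\<Sum>i\<in>I. \<Sum>a\<in>A. \<Sum>b\<in>A. \<theta> a b * f a i * f b i)"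
    by (simp add: sum_distrib_left mult.assoc sum.swap[of _ I])
  also have "\<dots> \<ge> 0"
    by (rule sum_nonneg) (rule psd)
  finally show ?thesis .
qed

definition poly_antideriv :: "real poly \<Rightarrow> real poly" where
  "poly_antideriv p = (\<Sum>i\<le>degree p. monom (coeff p i / real (Suc i)) (Suc i))"

lemma pderiv_poly_antideriv [simp]: "pderiv (poly_antideriv p) = p"
  unfolding poly_antideriv_def
  by (simp add: pderiv_sum pderiv_monom poly_as_sum_of_monoms)

lemma coeff_poly_antideriv_Suc: "coeff (poly_antideriv p) (Suc i) = coeff p i / real (Suc i)"
  by (cases "i \<le> degree p") (auto simp: poly_antideriv_def coeff_sum coeff_eq_0)

lemma degree_poly_antideriv_le: "degree (poly_antideriv p) \<le> Suc (degree p)"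
  unfolding poly_antideriv_def by (intro degree_sum_le) (auto intro: order.trans[OF degree_monom_le])

lemma integral_poly_pderiv:
  fixes a b :: real
  assumes "a \<le> b"
  shows "integral {a..b} (poly (pderiv p)) = poly p b - poly p a"
proof -
  have "(poly (pderiv p) has_integral poly p b - poly p a) {a..b}"
    using assms by (intro fundamental_theorem_of_calculus)
      (auto simp: has_real_derivative_iff_has_vector_derivative[symmetric]
            intro: has_field_derivative_at_within)
  then show ?thesis by blast
qed

lemma integral_poly:
  fixes a b :: real
  shows "a \<le> b \<Longrightarrow> integral {a..b} (poly p) = poly (poly_antideriv p) b - poly (poly_antideriv p) a"
  using integral_poly_pderiv[of a b "poly_antideriv p"] by simp

definition integral01 :: "real poly \<Rightarrow> real" where
  "integral01 p = integral {0..1} (poly p)"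

lemma integral01_pderiv: "integral01 (pderiv p) = poly p 1 - poly p 0"
  by (simp add: integral01_def integral_poly_pderiv)

lemma integral01_add: "integral01 (p + q) = integral01 p + integral01 q"
  using integral01_pderiv[of "poly_antideriv p + poly_antideriv q"]
  by (simp add: pderiv_add integral01_def integral_poly)

lemma integral01_smult: "integral01 (smult c p) = c * integral01 p"
  using integral01_pderiv[of "smult c (poly_antideriv p)"]
  by (simp add: pderiv_smult integral01_def integral_poly algebra_simps)

lemma integral01_diff: "integral01 (p - q) = integral01 p - integral01 q"
  using integral01_add[of p "-q"] integral01_smult[of "-1" q] by simp

lemma integral01_0 [simp]: "integral01 0 = 0"
  using integral01_smult[of 0 0] by simp

lemma integral01_sum: "integral01 (\<Sum>x\<in>A. f x) = (\<Sum>x\<in>A. integral01 (f x))"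
  by (induction A rule: infinite_finite_induct) (simp_all add: integral01_add)

lemma integral01_by_parts:
  "integral01 (pderiv p * q) = poly p 1 * poly q 1 - poly p 0 * poly q 0 - integral01 (p * pderiv q)"
  using integral01_pderiv[of "p * q"] by (simp add: pderiv_mult integral01_add mult.commute)

section \<open>Legendre polynomials\<close>

declare legendre.simps(3) [simp del]

lemma poly_legendre_Suc_Suc:
  "(real n + 2) * poly (legendre (Suc (Suc n))) t =
     (2 * real n + 3) * t * poly (legendre (Suc n)) t - (real n + 1) * poly (legendre n) t"
proof -
  have "real n + 2 \<noteq> 0" by simp
  then show ?thesis by (simp add: legendre.simps(3) right_diff_distrib)
qed

lemma poly_pderiv_legendre_Suc_Suc:
  "(real n + 2) * poly (pderiv (legendre (Suc (Suc n)))) t =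
     (2 * real n + 3) * (poly (legendre (Suc n)) t + t * poly (pderiv (legendre (Suc n))) t)
     - (real n + 1) * poly (pderiv (legendre n)) t"
proof -
  have "real n + 2 \<noteq> 0" by simp
  then show ?thesis
    by (simp add: legendre.simps(3) pderiv_diff pderiv_smult pderiv_mult pderiv_pCons right_diff_distrib
        distrib_left mult.assoc)
qed

lemma legendre_pderiv_identities:
  "poly (pderiv (legendre (Suc n))) t
     = t * poly (pderiv (legendre n)) t + (real n + 1) * poly (legendre n) t
   \<and> t * poly (pderiv (legendre (Suc n))) t - poly (pderiv (legendre n)) t
     = (real n + 1) * poly (legendre (Suc n)) t"
proof (induction n)
  case 0
  then show ?case by (simp add: pderiv_pCons)
next
  case (Suc n)
  define m where "m = real n"
  define p0 p1 p2 where "p0 = poly (legendre n) t" and "p1 = poly (legendre (Suc n)) t"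
    and "p2 = poly (legendre (Suc (Suc n))) t"
  define d0 d1 d2 where "d0 = poly (pderiv (legendre n)) t"
    and "d1 = poly (pderiv (legendre (Suc n))) t" and "d2 = poly (pderiv (legendre (Suc (Suc n)))) t"
  have A: "d1 = t * d0 + (m + 1) * p0" and B: "t * d1 - d0 = (m + 1) * p1"
    using Suc.IH by (auto simp: m_def p0_def p1_def d0_def d1_def)
  have rec: "(m + 2) * p2 = (2 * m + 3) * t * p1 - (m + 1) * p0"
    and rec': "(m + 2) * d2 = (2 * m + 3) * (p1 + t * d1) - (m + 1) * d0"
    unfolding m_def p0_def p1_def p2_def d0_def d1_def d2_def
    by (rule poly_legendre_Suc_Suc poly_pderiv_legendre_Suc_Suc)+
  have d0: "d0 = t * d1 - (m + 1) * p1"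
    using B by simp
  have "(m + 2) * d2 = (m + 2) * (t * d1 + (m + 2) * p1)"
    using rec' unfolding d0 by (simp add: algebra_simps power2_eq_square)
  then have A': "d2 = t * d1 + (m + 2) * p1"
    by (simp add: m_def)
  have "t * (t * d0 + (m + 1) * p0) - d0 = (m + 1) * p1"
    using A B by simp
  then have C: "(t * t - 1) * d0 = (m + 1) * (p1 - t * p0)"
    by (simp add: algebra_simps)
  have "(t * t - 1) * d1 = t * ((t * t - 1) * d0) + (m + 1) * (t * t - 1) * p0"
    unfolding A by (simp add: algebra_simps)
  also have "\<dots> = (m + 1) * (t * p1 - p0)"
    unfolding C by (simp add: algebra_simps)
  finally have "(t * t - 1) * d1 = (m + 1) * (t * p1 - p0)" .
  then have "t * d2 - d1 = (m + 2) * p2"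
    using A' rec by (simp add: algebra_simps)
  with A' show ?case
    by (simp add: m_def p1_def p2_def d1_def d2_def algebra_simps)
qed

lemma legendre_pderiv_difference:
  "pderiv (legendre (Suc (Suc n))) - pderiv (legendre n) = smult (2 * real n + 3) (legendre (Suc n))"
proof (rule poly_eq_poly_eq_iff[THEN iffD1], rule ext)
  fix t
  show "poly (pderiv (legendre (Suc (Suc n))) - pderiv (legendre n)) t =
        poly (smult (2 * real n + 3) (legendre (Suc n))) t"
  proof -
    have "poly (pderiv (legendre (Suc (Suc n)))) t
        = t * poly (pderiv (legendre (Suc n))) t + (real n + 2) * poly (legendre (Suc n)) t"
      using legendre_pderiv_identities[of "Suc n" t] by simp
    moreover have "poly (pderiv (legendre n)) t
        = t * poly (pderiv (legendre (Suc n))) t - (real n + 1) * poly (legendre (Suc n)) t"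
      using legendre_pderiv_identities[of n t] by linarith
    ultimately show ?thesis
      by (simp add: algebra_simps)
  qed
qed

lemma poly_legendre_one [simp]: "poly (legendre n) 1 = 1"
proof (induction n rule: legendre.induct)
  case (3 n)
  then have "(real n + 2) * poly (legendre (Suc (Suc n))) 1 = real n + 2"
    by (simp add: poly_legendre_Suc_Suc)
  then show ?case by simp
qed simp_all

lemma poly_legendre_neg_one: "poly (legendre n) (-1) = (-1) ^ n"
proof (induction n rule: legendre.induct)
  case (3 n)
  then have "(real n + 2) * poly (legendre (Suc (Suc n))) (-1) = (real n + 2) * (-1) ^ n"
    using poly_legendre_Suc_Suc[of n "-1"] by (simp add: algebra_simps)
  then show ?case by simp
qed simp_all

lemma degree_legendre_le: "degree (legendre n) \<le> n"
proof (induction n rule: legendre.induct)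
  case (3 n)
  have "degree ([:0, 1:] * legendre (Suc n)) \<le> Suc (Suc n)"
    using degree_mult_le[of "[:0, 1:]" "legendre (Suc n)"] 3 by simp
  with 3 show ?case
    by (simp only: legendre.simps(3)) (intro degree_diff_le; simp add: le_SucI)
qed simp_all

lemma coeff_legendre_Suc_top:
  "coeff (legendre (Suc n)) (Suc n) = (2 * real n + 1) / (real n + 1) * coeff (legendre n) n"
proof (cases n)
  case (Suc m)
  have "coeff (legendre m) (Suc (Suc m)) = 0"
    using degree_legendre_le[of m] by (simp add: coeff_eq_0)
  then show ?thesis by (simp add: Suc legendre.simps(3) algebra_simps)
qed simp

lemma lead_coeff_legendre_pos: "coeff (legendre n) n > 0"
  by (induction n) (simp_all add: coeff_legendre_Suc_top)

lemma degree_legendre [simp]: "degree (legendre n) = n"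
  using degree_legendre_le[of n] lead_coeff_legendre_pos[of n] le_degree[of "legendre n" n]
  by fastforce

definition shifted_legendre :: "nat \<Rightarrow> real poly" where
  "shifted_legendre n = pcompose (legendre n) [:-1, 2:]"

lemma poly_shifted_legendre: "poly (shifted_legendre n) t = poly (legendre n) (2 * t - 1)"
  by (simp add: shifted_legendre_def poly_pcompose algebra_simps)

lemma shleg_unit_interval: "shleg 0 1 n = poly (shifted_legendre n)"
  by (simp add: fun_eq_iff shleg_def poly_shifted_legendre)

lemma shifted_legendre_0 [simp]: "shifted_legendre 0 = 1"
  by (simp add: shifted_legendre_def pcompose_1)

lemma degree_shifted_legendre [simp]: "degree (shifted_legendre n) = n"
  by (simp add: shifted_legendre_def degree_pcompose)

lemma coeff_shifted_legendre_top: "coeff (shifted_legendre n) n = 2 ^ n * coeff (legendre n) n"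
  using lead_coeff_comp[of "[:-1, 2:]" "legendre n"]
  by (simp add: shifted_legendre_def degree_pcompose mult.commute)

lemma lead_coeff_shifted_legendre_pos: "coeff (shifted_legendre n) n > 0"
  by (simp add: coeff_shifted_legendre_top lead_coeff_legendre_pos)

lemma coeff_shifted_legendre_Suc_top:
  "coeff (shifted_legendre (Suc n)) (Suc n) = 2 * (2 * real n + 1) / (real n + 1) * coeff (shifted_legendre n) n"
  by (simp add: coeff_shifted_legendre_top coeff_legendre_Suc_top)

lemma poly_shifted_legendre_one [simp]: "poly (shifted_legendre n) 1 = 1"
  by (simp add: poly_shifted_legendre)

lemma poly_shifted_legendre_zero [simp]: "poly (shifted_legendre n) 0 = (-1) ^ n"
  using poly_legendre_neg_one[of n] by (simp add: poly_shifted_legendre)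

lemma shifted_legendre_pderiv_difference:
  "pderiv (shifted_legendre (Suc (Suc n))) - pderiv (shifted_legendre n)
     = smult (2 * (2 * real n + 3)) (shifted_legendre (Suc n))"
proof -
  have "pderiv (shifted_legendre (Suc (Suc n))) - pderiv (shifted_legendre n) =
        smult 2 (pcompose (pderiv (legendre (Suc (Suc n))) - pderiv (legendre n)) [:-1, 2:])"
    by (simp add: shifted_legendre_def pderiv_pcompose pderiv_pCons pcompose_diff smult_diff_right)
  then show ?thesis
    by (simp add: legendre_pderiv_difference pcompose_smult shifted_legendre_def)
qed

lemma pderiv_shifted_legendre_1: "pderiv (shifted_legendre (Suc 0)) = [:2:]"
  by (simp add: shifted_legendre_def pderiv_pCons pcompose_pCons)

text \<open>An antiderivative of \<open>L\<^sub>m\<^sub>+\<^sub>1\<close> is \<open>(L\<^sub>m\<^sub>+\<^sub>2 - L\<^sub>m) / (2 (2m + 3))\<close>, which vanishes at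
  both endpoints; integration by parts against it lowers the degree of the test polynomial and
  takes the place of Rodrigues' formula in the orthogonality proof.\<close>
lemma integral01_shifted_legendre_by_parts:
  "integral01 (shifted_legendre (Suc m) * q) =
     (integral01 (shifted_legendre m * pderiv q)
        - integral01 (shifted_legendre (Suc (Suc m)) * pderiv q)) / (2 * (2 * real m + 3))"
proof -
  let ?F = "shifted_legendre (Suc (Suc m)) - shifted_legendre m"
  have "shifted_legendre (Suc m) = smult (1 / (2 * (2 * real m + 3))) (pderiv ?F)"
    using shifted_legendre_pderiv_difference[of m] by (simp add: pderiv_diff)
  then have "integral01 (shifted_legendre (Suc m) * q) =
               integral01 (pderiv ?F * q) / (2 * (2 * real m + 3))"
    by (simp add: integral01_smult)
  also have "integral01 (pderiv ?F * q) = - integral01 (?F * pderiv q)"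
    by (simp add: integral01_by_parts)
  finally show ?thesis
    by (simp add: left_diff_distrib integral01_diff)
qed

lemma integral01_shifted_legendre_orthogonal:
  "degree q < n \<Longrightarrow> integral01 (shifted_legendre n * q) = 0"
proof (induction "degree q" arbitrary: q n rule: less_induct)
  case less
  obtain m where n: "n = Suc m"
    using less.prems by (cases n) auto
  have "integral01 (shifted_legendre m * pderiv q) = 0
      \<and> integral01 (shifted_legendre (Suc (Suc m)) * pderiv q) = 0"
  proof (cases "pderiv q = 0")
    case False
    then have "degree (pderiv q) < degree q" "degree (pderiv q) < m"
      using less.prems n by (auto simp: degree_pderiv pderiv_eq_0_iff)
    then show ?thesis
      using less.hyps[of "pderiv q" m] less.hyps[of "pderiv q" "Suc (Suc m)"] by simp
  qed simp
  then show ?case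
    unfolding n integral01_shifted_legendre_by_parts[of m] by simp
qed

lemma integral01_shifted_legendre_sq:
  "integral01 (shifted_legendre n * shifted_legendre n) = 1 / (2 * real n + 1)"
proof (induction n)
  case 0
  show ?case using integral01_pderiv[of "[:0, 1:]"] by (simp add: pderiv_pCons one_pCons)
next
  case (Suc m)
  have top: "integral01 (shifted_legendre (Suc (Suc m)) * pderiv (shifted_legendre (Suc m))) = 0"
    by (rule integral01_shifted_legendre_orthogonal) (simp add: degree_pderiv)
  have bottom: "integral01 (shifted_legendre m * pderiv (shifted_legendre (Suc m)))
      = 2 * (2 * real m + 1) * integral01 (shifted_legendre m * shifted_legendre m)"
  proof (cases m)
    case 0
    then show ?thesis
      using integral01_smult[of 2 1] by (simp add: pderiv_shifted_legendre_1)
  next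
    case (Suc j)
    have "pderiv (shifted_legendre (Suc m))
        = pderiv (shifted_legendre j) + smult (2 * (2 * real j + 3)) (shifted_legendre m)"
      using shifted_legendre_pderiv_difference[of j] Suc by (simp add: algebra_simps)
    moreover have "integral01 (shifted_legendre m * pderiv (shifted_legendre j)) = 0"
      by (rule integral01_shifted_legendre_orthogonal) (simp add: degree_pderiv Suc)
    ultimately show ?thesis
      using Suc by (simp add: distrib_left integral01_add integral01_smult)
  qed
  have "(2 * (2 * real m + 1) * (1 / (2 * real m + 1)) - 0) / (2 * (2 * real m + 3))
      = 1 / (2 * real (Suc m) + 1)"
    by (simp add: divide_simps) (simp add: algebra_simps)
  then show ?case
    unfolding integral01_shifted_legendre_by_parts[of m] top bottom Suc.IH .
qed

lemma integral01_shifted_legendre_mult: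
  "integral01 (shifted_legendre l * shifted_legendre m) = (if l = m then 1 / (2 * real l + 1) else 0)"
  using integral01_shifted_legendre_orthogonal[of "shifted_legendre l" m]
    integral01_shifted_legendre_orthogonal[of "shifted_legendre m" l]
  by (cases l m rule: linorder_cases) (simp_all add: integral01_shifted_legendre_sq mult.commute)

lemma shifted_legendre_expansion:
  "degree p \<le> n \<Longrightarrow> \<exists>a. p = (\<Sum>l\<le>n. smult (a l) (shifted_legendre l))"
proof (induction n arbitrary: p)
  case 0
  then obtain c where "p = [:c:]"
    by (metis degree_eq_zeroE le_zero_eq)
  then show ?case
    by (intro exI[of _ "\<lambda>_. c"]) simp
next
  case (Suc n)
  define c where "c = coeff p (Suc n) / coeff (shifted_legendre (Suc n)) (Suc n)"
  have "degree (p - smult c (shifted_legendre (Suc n))) \<le> n"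
  proof (rule degree_le, intro allI impI)
    fix i
    assume "n < i"
    then consider "i = Suc n" | "Suc n < i" by linarith
    then show "coeff (p - smult c (shifted_legendre (Suc n))) i = 0"
      using Suc.prems lead_coeff_shifted_legendre_pos[of "Suc n"]
      by cases (auto simp: c_def coeff_eq_0)
  qed
  then obtain a where a: "p - smult c (shifted_legendre (Suc n))
      = (\<Sum>l\<le>n. smult (a l) (shifted_legendre l))"
    using Suc.IH by blast
  have "(\<Sum>l\<le>n. smult ((a(Suc n := c)) l) (shifted_legendre l))
      = (\<Sum>l\<le>n. smult (a l) (shifted_legendre l))"
    by (intro sum.cong) auto
  with a have "p = (\<Sum>l\<le>Suc n. smult ((a(Suc n := c)) l) (shifted_legendre l))"
    by (simp add: eq_diff_eq)
  then show ?case by blast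
qed

lemma integral01_expansion_sq:
  "integral01 ((\<Sum>l\<le>n. smult (a l) (shifted_legendre l)) * (\<Sum>l\<le>n. smult (a l) (shifted_legendre l)))
     = (\<Sum>l\<le>n. (a l)\<^sup>2 / (2 * real l + 1))"
proof -
  have "(\<Sum>l\<le>n. smult (a l) (shifted_legendre l)) * (\<Sum>l\<le>n. smult (a l) (shifted_legendre l))
      = (\<Sum>l\<le>n. \<Sum>m\<le>n. smult (a l * a m) (shifted_legendre l * shifted_legendre m))"
    by (simp add: sum_product mult.commute)
  then have "integral01 ((\<Sum>l\<le>n. smult (a l) (shifted_legendre l)) * (\<Sum>l\<le>n. smult (a l) (shifted_legendre l)))
      = (\<Sum>l\<le>n. \<Sum>m\<le>n. a l * a m * integral01 (shifted_legendre l * shifted_legendre m))"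
    by (simp add: integral01_sum integral01_smult)
  also have "\<dots> = (\<Sum>l\<le>n. \<Sum>m\<le>n. if m = l then (a l)\<^sup>2 / (2 * real l + 1) else 0)"
    by (intro sum.cong refl) (auto simp: integral01_shifted_legendre_mult power2_eq_square)
  finally show ?thesis
    by simp
qed

lemma coeff_expansion_top:
  "coeff (\<Sum>l\<le>n. smult (a l) (shifted_legendre l)) n = a n * coeff (shifted_legendre n) n"
proof -
  have "coeff (\<Sum>l\<le>n. smult (a l) (shifted_legendre l)) n
      = (\<Sum>l\<le>n. if l = n then a n * coeff (shifted_legendre n) n else 0)"
    unfolding coeff_sum by (intro sum.cong refl) (auto simp: coeff_eq_0)
  then show ?thesis by simp
qed

section \<open>Quadrature rules satisfying Assumption (S)\<close>

lemma quad_add: "quad k nd wt (poly (p + q)) = quad k nd wt (poly p) + quad k nd wt (poly q)"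
  by (simp add: quad_def algebra_simps sum.distrib)

lemma quad_smult: "quad k nd wt (poly (smult c p)) = c * quad k nd wt (poly p)"
  by (simp add: quad_def algebra_simps sum_distrib_left)

text \<open>The contribution \<open>(p, M\<^sup>*q)\<close> of one cell to \<open>(v, \<omega>)\<^sub>*\<close>, transported to \<open>[0, 1]\<close>.\<close>
definition ref_star_ip :: "nat \<Rightarrow> (nat \<Rightarrow> real) \<Rightarrow> (nat \<Rightarrow> real) \<Rightarrow> real poly \<Rightarrow> real poly \<Rightarrow> real"
  where "ref_star_ip k xi w p q =
    (\<Sum>j\<le>k. (poly q 0 + (\<Sum>l\<le>j. w l * poly (pderiv q) (xi l))) * integral {xi j..xi (Suc j)} (poly p))"

locale quadrature_S =
  fixes k :: nat and xi w :: "nat \<Rightarrow> real"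
  assumes nodes: "valid_nodes k 0 1 xi"
    and S: "assumption_S k 0 1 xi w"
begin

lemma k_ge_1: "1 \<le> k"
  using S by (simp add: assumption_S_def)

lemma xi_0: "xi 0 = 0" and xi_Suc_k: "xi (Suc k) = 1"
  and xi_mono: "j \<le> k \<Longrightarrow> xi j \<le> xi (Suc j)"
  using nodes by (auto simp: valid_nodes_def less_imp_le)

definition quad_error :: "real poly \<Rightarrow> real" where
  "quad_error p = integral01 p - quad k xi w (poly p)"

lemma quad_error_add: "quad_error (p + q) = quad_error p + quad_error q"
  by (simp add: quad_error_def quad_add integral01_add)

lemma quad_error_smult: "quad_error (smult c p) = c * quad_error p"
  by (simp add: quad_error_def quad_smult integral01_smult algebra_simps)

lemma quad_error_exact: "degree p \<le> 2 * k - 1 \<Longrightarrow> quad_error p = 0"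
  using S by (simp add: assumption_S_def quad_error_def integral01_def)

definition \<rho> :: real where
  "\<rho> = quad_error (monom 1 (2 * k))"

lemma quad_error_degree_2k:
  assumes "degree p \<le> 2 * k"
  shows "quad_error p = coeff p (2 * k) * \<rho>"
proof -
  define q where "q = p - monom (coeff p (2 * k)) (2 * k)"
  have "degree q \<le> 2 * k - 1"
  proof (rule degree_le, intro allI impI)
    fix i
    assume "2 * k - 1 < i"
    then consider "i = 2 * k" | "2 * k < i"
      using k_ge_1 by linarith
    then show "coeff q i = 0"
      using assms by cases (auto simp: q_def coeff_eq_0)
  qed
  then have "quad_error q = 0"
    by (rule quad_error_exact)
  have "quad_error p = quad_error (q + smult (coeff p (2 * k)) (monom 1 (2 * k)))"
    by (simp add: q_def smult_monom)
  also have "\<dots> = coeff p (2 * k) * \<rho>"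
    by (simp add: quad_error_add quad_error_smult \<open>quad_error q = 0\<close> \<rho>_def)
  finally show ?thesis .
qed

lemma quad_pderiv_mult_symmetric:
  assumes "degree p \<le> k" "degree q \<le> k"
  shows "quad k xi w (poly (p * pderiv q)) + quad k xi w (poly (q * pderiv p))
       = poly p 1 * poly q 1 - poly p 0 * poly q 0"
proof -
  have "degree (pderiv (p * q)) \<le> 2 * k - 1"
    using degree_mult_le[of p q] assms by (simp add: degree_pderiv)
  then have "quad_error (pderiv (p * q)) = 0"
    by (rule quad_error_exact)
  then have "quad k xi w (poly (pderiv (p * q))) = integral01 (pderiv (p * q))"
    by (simp add: quad_error_def)
  also have "\<dots> = poly p 1 * poly q 1 - poly p 0 * poly q 0"
    by (simp add: integral01_pderiv)
  moreover have "pderiv (p * q) = p * pderiv q + q * pderiv p"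
    by (simp add: pderiv_mult algebra_simps)
  ultimately show ?thesis
    by (simp add: quad_add)
qed

text \<open>Summation by parts turns the control-volume sums into the quadrature of \<open>q'\<close> against an
  antiderivative of \<open>p\<close>; that product has degree \<open>2k\<close>, and its quadrature error is the
  rank-one correction.\<close>
lemma ref_star_ip_eq:
  assumes p: "degree p \<le> k" and q: "degree q \<le> k"
  shows "ref_star_ip k xi w p q = integral01 (p * q) + real k / (real k + 1) * \<rho> * coeff p k * coeff q k"
proof -
  define V where "V = [:poly (poly_antideriv p) 1:] - poly_antideriv p"
  define d where "d l = w l * poly (pderiv q) (xi l)" for l
  have V1: "poly V 1 = 0" and pderiv_V: "pderiv V = - p"
    by (simp_all add: V_def pderiv_diff pderiv_pCons)
  have "integral {xi j..xi (Suc j)} (poly p) = poly V (xi j) - poly V (xi (Suc j))" if "j \<le> k" for j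
    using integral_poly[OF xi_mono[OF that], of p] by (simp add: V_def)
  then have "ref_star_ip k xi w p q = (\<Sum>j\<le>k. (poly q 0 + (\<Sum>l\<le>j. d l)) * (poly V (xi j) - poly V (xi (Suc j))))"
    unfolding ref_star_ip_def d_def by (intro sum.cong) simp_all
  also have "\<dots> = poly q 0 * poly V (xi 0) + (\<Sum>j\<le>k. d j * poly V (xi j))
      - (poly q 0 + (\<Sum>l\<le>k. d l)) * poly V (xi (Suc k))"
    by (rule sum_by_parts_partial_sums)
  also have "\<dots> = poly q 0 * poly V 0 + quad k xi w (poly (pderiv q * V))"
    by (simp add: xi_0 xi_Suc_k V1 quad_def d_def algebra_simps)
  also have "quad k xi w (poly (pderiv q * V)) = integral01 (pderiv q * V) - quad_error (pderiv q * V)"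
    by (simp add: quad_error_def)
  also have "integral01 (pderiv q * V) = - poly q 0 * poly V 0 + integral01 (p * q)"
    unfolding integral01_by_parts pderiv_V V1 using integral01_smult[of "-1" "p * q"]
    by (simp add: mult.commute)
  also have "quad_error (pderiv q * V) = - (real k / (real k + 1)) * coeff p k * coeff q k * \<rho>"
  proof -
    have dq: "degree (pderiv q) \<le> k - 1"
      using q by (simp add: degree_pderiv)
    have dV: "degree V \<le> k + 1"
      using degree_poly_antideriv_le[of p] p unfolding V_def
      by (intro order.trans[OF degree_diff_le_max]) auto
    have "degree (pderiv q * V) \<le> 2 * k"
      using degree_mult_le[of "pderiv q" V] dq dV k_ge_1 by linarith
    moreover have "coeff (pderiv q * V) (2 * k) = coeff (pderiv q) (k - 1) * coeff V (k + 1)"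
      using coeff_mult_degree_bounds[OF dq dV] k_ge_1 by (simp add: mult_2)
    moreover have "coeff (pderiv q) (k - 1) = real k * coeff q k"
      using k_ge_1 by (simp add: coeff_pderiv)
    moreover have "coeff V (k + 1) = - coeff p k / (real k + 1)"
      by (simp add: V_def coeff_poly_antideriv_Suc)
    ultimately show ?thesis
      by (simp add: quad_error_degree_2k)
  qed
  finally show ?thesis
    by (simp add: algebra_simps)
qed

lemma ref_star_ip_commute:
  "degree p \<le> k \<Longrightarrow> degree q \<le> k \<Longrightarrow> ref_star_ip k xi w p q = ref_star_ip k xi w q p"
  by (simp add: ref_star_ip_eq mult.commute)

definition \<gamma> :: real where
  "\<gamma> = 1 / (2 * real k + 1) + real k / (real k + 1) * \<rho> * (coeff (shifted_legendre k) k)\<^sup>2"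

text \<open>The quadrature of \<open>L\<^sub>k\<^sub>+\<^sub>1 L\<^sub>k\<^sub>-\<^sub>1\<close> is minus its quadrature error, a multiple of \<open>\<rho>\<close>;
  by the recurrence for the leading coefficients, the inequality of Assumption (S) is then a
  positive multiple of \<open>\<gamma> > 0\<close>.\<close>
lemma \<gamma>_pos: "\<gamma> > 0"
proof -
  obtain m where k: "k = Suc m"
    using k_ge_1 by (cases k) auto
  define L0 L1 L2 where "L0 = coeff (shifted_legendre m) m"
    and "L1 = coeff (shifted_legendre (Suc m)) (Suc m)"
    and "L2 = coeff (shifted_legendre (Suc (Suc m))) (Suc (Suc m))"
  let ?p = "shifted_legendre (Suc (Suc m)) * shifted_legendre m"
  have "degree ?p \<le> 2 * k"
    using degree_mult_le[of "shifted_legendre (Suc (Suc m))" "shifted_legendre m"] by (simp add: k)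
  moreover have "coeff ?p (2 * k) = L2 * L0"
    using coeff_mult_degree_bounds[of "shifted_legendre (Suc (Suc m))" "Suc (Suc m)" "shifted_legendre m" m]
    by (simp add: k L0_def L2_def mult_2)
  moreover have "integral01 ?p = 0"
    by (simp add: integral01_shifted_legendre_orthogonal)
  ultimately have "quad k xi w (poly ?p) = - L2 * L0 * \<rho>"
    using quad_error_degree_2k[of ?p] by (simp add: quad_error_def)
  moreover have "(\<lambda>t. shleg 0 1 (k + 1) t * shleg 0 1 (k - 1) t) = poly ?p"
    by (simp add: shleg_unit_interval k fun_eq_iff)
  ultimately have pos: "1 / (2 * real m + 1) + L2 * L0 * \<rho> > 0"
    using S by (simp add: assumption_S_def k add.commute)
  have L2: "L2 = 2 * (2 * real (Suc m) + 1) / (real (Suc m) + 1) * L1"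
    unfolding L1_def L2_def by (rule coeff_shifted_legendre_Suc_top)
  have "L1 = 2 * (2 * real m + 1) / (real m + 1) * L0"
    unfolding L0_def L1_def by (rule coeff_shifted_legendre_Suc_top)
  then have L0: "L0 = real (Suc m) / (2 * (2 * real m + 1)) * L1"
    by (simp add: field_simps)
  have "\<gamma> = (2 * real m + 1) / (2 * real m + 3) * (1 / (2 * real m + 1) + L2 * L0 * \<rho>)"
    unfolding \<gamma>_def unfolding k L1_def[symmetric] L2 L0
    by (simp add: divide_simps) (simp add: algebra_simps power2_eq_square)
  with pos show ?thesis
    by simp
qed

lemma ref_star_ip_expansion:
  "ref_star_ip k xi w (\<Sum>l\<le>k. smult (a l) (shifted_legendre l)) (\<Sum>l\<le>k. smult (a l) (shifted_legendre l))
     = (\<Sum>l<k. (a l)\<^sup>2 / (2 * real l + 1)) + (a k)\<^sup>2 * \<gamma>"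
proof -
  have "degree (\<Sum>l\<le>k. smult (a l) (shifted_legendre l)) \<le> k"
    by (intro degree_sum_le) (auto intro: order.trans[OF degree_smult_le])
  then have "ref_star_ip k xi w (\<Sum>l\<le>k. smult (a l) (shifted_legendre l)) (\<Sum>l\<le>k. smult (a l) (shifted_legendre l))
      = (\<Sum>l\<le>k. (a l)\<^sup>2 / (2 * real l + 1))
        + real k / (real k + 1) * \<rho> * (a k * coeff (shifted_legendre k) k) * (a k * coeff (shifted_legendre k) k)"
    by (simp only: ref_star_ip_eq integral01_expansion_sq coeff_expansion_top)
  then show ?thesis
    by (simp add: lessThan_Suc_atMost[symmetric] \<gamma>_def algebra_simps power2_eq_square)
qed

lemma ref_star_ip_coercive:
  obtains \<epsilon> where "\<epsilon> > 0" and "\<And>a. \<epsilon> * (\<Sum>l\<le>k. (a l)\<^sup>2)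
    \<le> ref_star_ip k xi w (\<Sum>l\<le>k. smult (a l) (shifted_legendre l)) (\<Sum>l\<le>k. smult (a l) (shifted_legendre l))"
proof
  let ?\<epsilon> = "min (1 / (2 * real k + 1)) \<gamma>"
  show "?\<epsilon> > 0"
    using \<gamma>_pos by simp
  fix a :: "nat \<Rightarrow> real"
  have "?\<epsilon> * (a l)\<^sup>2 \<le> (a l)\<^sup>2 / (2 * real l + 1)" if "l < k" for l
  proof -
    have "?\<epsilon> \<le> 1 / (2 * real l + 1)"
      using that by (intro min.coboundedI1) (simp add: frac_le)
    then show ?thesis
      using mult_right_mono[of ?\<epsilon> "1 / (2 * real l + 1)" "(a l)\<^sup>2"] by simp
  qed
  then have "(\<Sum>l<k. ?\<epsilon> * (a l)\<^sup>2) \<le> (\<Sum>l<k. (a l)\<^sup>2 / (2 * real l + 1))"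
    by (intro sum_mono) simp
  moreover have "?\<epsilon> * (a k)\<^sup>2 \<le> (a k)\<^sup>2 * \<gamma>"
    using mult_right_mono[of ?\<epsilon> \<gamma> "(a k)\<^sup>2"] by (simp add: mult.commute)
  ultimately show "?\<epsilon> * (\<Sum>l\<le>k. (a l)\<^sup>2)
    \<le> ref_star_ip k xi w (\<Sum>l\<le>k. smult (a l) (shifted_legendre l)) (\<Sum>l\<le>k. smult (a l) (shifted_legendre l))"
    unfolding ref_star_ip_expansion
    by (simp add: lessThan_Suc_atMost[symmetric] distrib_left sum_distrib_left)
qed

lemma ref_star_ip_nonneg:
  assumes "degree p \<le> k"
  shows "0 \<le> ref_star_ip k xi w p p"
proof -
  obtain a where a: "p = (\<Sum>l\<le>k. smult (a l) (shifted_legendre l))"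
    using shifted_legendre_expansion[OF assms] by blast
  obtain \<epsilon> where "\<epsilon> > 0" and coercive: "\<And>a. \<epsilon> * (\<Sum>l\<le>k. (a l)\<^sup>2)
    \<le> ref_star_ip k xi w (\<Sum>l\<le>k. smult (a l) (shifted_legendre l)) (\<Sum>l\<le>k. smult (a l) (shifted_legendre l))"
    using ref_star_ip_coercive by blast
  moreover have "0 \<le> \<epsilon> * (\<Sum>l\<le>k. (a l)\<^sup>2)"
    using \<open>\<epsilon> > 0\<close> by (simp add: sum_nonneg)
  moreover have "\<epsilon> * (\<Sum>l\<le>k. (a l)\<^sup>2) \<le> ref_star_ip k xi w p p"
    using coercive[of a] unfolding a[symmetric] .
  ultimately show ?thesis
    by linarith
qed

text \<open>Equivalence of norms on \<open>\<bbbP>\<^sup>k\<close>, made explicit through the Legendre expansion and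
  Cauchy-Schwarz.\<close>
lemma node_values_le_ref_star_norm:
  obtains K where "\<And>p j. degree p \<le> k \<Longrightarrow> j \<le> Suc k \<Longrightarrow>
      \<bar>poly p (xi j)\<bar> \<le> K * sqrt (ref_star_ip k xi w p p)
    \<and> \<bar>poly (pderiv p) (xi j)\<bar> \<le> K * sqrt (ref_star_ip k xi w p p)"
proof -
  obtain \<epsilon> where \<epsilon>: "\<epsilon> > 0" and coercive: "\<And>a. \<epsilon> * (\<Sum>l\<le>k. (a l)\<^sup>2)
    \<le> ref_star_ip k xi w (\<Sum>l\<le>k. smult (a l) (shifted_legendre l)) (\<Sum>l\<le>k. smult (a l) (shifted_legendre l))"
    using ref_star_ip_coercive by blast
  define B where "B = (\<Sum>j\<le>Suc k. L2_set (\<lambda>l. poly (shifted_legendre l) (xi j)) {..k}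
                                 + L2_set (\<lambda>l. poly (pderiv (shifted_legendre l)) (xi j)) {..k})"
  have B_ge: "L2_set (\<lambda>l. poly (shifted_legendre l) (xi j)) {..k}
      + L2_set (\<lambda>l. poly (pderiv (shifted_legendre l)) (xi j)) {..k} \<le> B" if "j \<le> Suc k" for j
    using that unfolding B_def by (intro member_le_sum) auto
  show ?thesis
  proof
    fix p :: "real poly" and j
    assume p: "degree p \<le> k" and j: "j \<le> Suc k"
    obtain a where a: "p = (\<Sum>l\<le>k. smult (a l) (shifted_legendre l))"
      using shifted_legendre_expansion[OF p] by blast
    have "\<epsilon> * (\<Sum>l\<le>k. (a l)\<^sup>2) \<le> ref_star_ip k xi w p p"
      using coercive[of a] unfolding a[symmetric] .
    then have "(\<Sum>l\<le>k. (a l)\<^sup>2) \<le> ref_star_ip k xi w p p / \<epsilon>"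
      using \<epsilon> by (simp add: pos_le_divide_eq mult.commute)
    then have a_le: "L2_set a {..k} \<le> sqrt (ref_star_ip k xi w p p) / sqrt \<epsilon>"
      unfolding L2_set_def by (metis real_sqrt_le_mono real_sqrt_divide)
    have "\<bar>\<Sum>l\<le>k. a l * y l\<bar> \<le> B / sqrt \<epsilon> * sqrt (ref_star_ip k xi w p p)"
      if "L2_set y {..k} \<le> B" for y
    proof -
      have "\<bar>\<Sum>l\<le>k. a l * y l\<bar> \<le> L2_set a {..k} * L2_set y {..k}"
        by (rule abs_sum_mult_le_L2_set)
      also have "\<dots> \<le> sqrt (ref_star_ip k xi w p p) / sqrt \<epsilon> * B"
        using a_le that order_trans[OF L2_set_nonneg a_le] by (intro mult_mono) auto
      finally show ?thesis
        by (simp add: ac_simps)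
    qed
    moreover have "L2_set (\<lambda>l. poly (shifted_legendre l) (xi j)) {..k} \<le> B"
      and "L2_set (\<lambda>l. poly (pderiv (shifted_legendre l)) (xi j)) {..k} \<le> B"
      using B_ge[OF j] L2_set_nonneg[of "\<lambda>l. poly (shifted_legendre l) (xi j)" "{..k}"]
        L2_set_nonneg[of "\<lambda>l. poly (pderiv (shifted_legendre l)) (xi j)" "{..k}"] by linarith+
    moreover have "poly p t = (\<Sum>l\<le>k. a l * poly (shifted_legendre l) t)"
      and "poly (pderiv p) t = (\<Sum>l\<le>k. a l * poly (pderiv (shifted_legendre l)) t)" for t
      by (simp_all add: a poly_sum pderiv_sum pderiv_smult)
    ultimately show "\<bar>poly p (xi j)\<bar> \<le> B / sqrt \<epsilon> * sqrt (ref_star_ip k xi w p p)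
      \<and> \<bar>poly (pderiv p) (xi j)\<bar> \<le> B / sqrt \<epsilon> * sqrt (ref_star_ip k xi w p p)"
      by auto
  qed
qed

end

section \<open>Cells of a periodic mesh\<close>

definition pullback :: "(nat \<Rightarrow> real) \<Rightarrow> (nat \<Rightarrow> real poly) \<Rightarrow> nat \<Rightarrow> real poly" where
  "pullback x v i = pcompose (v i) [:x i, x (Suc i) - x i:]"

lemma poly_pullback: "poly (pullback x v i) t = poly (v i) (x i + t * (x (Suc i) - x i))"
  by (simp add: pullback_def poly_pcompose algebra_simps)

lemma poly_pullback_0 [simp]: "poly (pullback x v i) 0 = poly (v i) (x i)"
  and poly_pullback_1 [simp]: "poly (pullback x v i) 1 = poly (v i) (x (Suc i))"
  by (simp_all add: poly_pullback)

lemma poly_pullback_cnode: "poly (pullback x v i) (xi j) = poly (v i) (cnode x xi i j)"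
  by (simp add: poly_pullback cnode_def)

lemma cweight_pderiv_pullback:
  "cweight x w i j * poly (pderiv (v i)) (cnode x xi i j) = w j * poly (pderiv (pullback x v i)) (xi j)"
  by (simp add: pullback_def pderiv_pcompose pderiv_pCons poly_pcompose cweight_def cnode_def algebra_simps)

lemma degree_pullback_le: "degree (pullback x v i) \<le> degree (v i)"
  using degree_pcompose_le[of "v i" "[:x i, x (Suc i) - x i:]"]
  by (simp add: pullback_def degree_pCons_eq_if split: if_splits)

lemma integral_pullback:
  assumes "x i < x (Suc i)" "a \<le> b"
  shows "integral {x i + a * (x (Suc i) - x i) .. x i + b * (x (Suc i) - x i)} (poly (v i))
       = (x (Suc i) - x i) * integral {a..b} (poly (pullback x v i))"
proof -
  define h where "h = x (Suc i) - x i"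
  have h: "h > 0"
    using assms(1) by (simp add: h_def)
  define F where "F = smult (1 / h) (pcompose (poly_antideriv (v i)) [:x i, h:])"
  have "x i + a * h \<le> x i + b * h"
    using assms(2) h by simp
  then have "integral {x i + a * h .. x i + b * h} (poly (v i))
      = poly (poly_antideriv (v i)) (x i + b * h) - poly (poly_antideriv (v i)) (x i + a * h)"
    by (rule integral_poly)
  also have "\<dots> = h * (poly F b - poly F a)"
    using h by (simp add: F_def poly_pcompose algebra_simps)
  also have "pderiv F = pullback x v i"
    using h by (simp add: F_def pderiv_smult pderiv_pcompose pderiv_pCons pullback_def h_def)
  then have "poly F b - poly F a = integral {a..b} (poly (pullback x v i))"
    using assms(2) by (metis integral_poly_pderiv)
  finally show ?thesis
    by (simp add: h_def)
qed

lemma jump_pullback: "jump N x v i = poly (pullback x v (Suc i mod N)) 0 - poly (pullback x v i) 1"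
  by (simp add: jump_def)

lemma Hstar_pullback:
  "Hstar N k x xi w \<beta> v om = \<beta> *
     ((\<Sum>i<N. quad k xi w (poly (pullback x v i * pderiv (pullback x om i))))
      + (\<Sum>i<N. poly (pullback x v i) 1 * jump N x om i))"
proof -
  have "cweight x w i j * (poly (v i) (cnode x xi i j) * poly (pderiv (om i)) (cnode x xi i j))
      = w j * (poly (pullback x v i) (xi j) * poly (pderiv (pullback x om i)) (xi j))" for i j
    using cweight_pderiv_pullback[of x w i j om xi] by (simp add: poly_pullback_cnode ac_simps)
  then show ?thesis
    by (simp add: Hstar_def quad_def)
qed

locale dg_mesh = quadrature_S +
  fixes N :: nat and x :: "nat \<Rightarrow> real"
  assumes N_pos: "1 \<le> N"
    and cells: "\<forall>i<N. x i < x (Suc i)"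
begin

lemma star_ip_eq_sum:
  "star_ip N k x xi w v om
     = (\<Sum>i<N. (x (Suc i) - x i) * ref_star_ip k xi w (pullback x v i) (pullback x om i))"
proof -
  have "Mstar x xi w om i j * integral {cnode x xi i j..cnode x xi i (Suc j)} (poly (v i))
      = (x (Suc i) - x i) * ((poly (pullback x om i) 0
          + (\<Sum>l\<le>j. w l * poly (pderiv (pullback x om i)) (xi l)))
          * integral {xi j..xi (Suc j)} (poly (pullback x v i)))"
    if "i < N" "j \<le> k" for i j
  proof -
    have "Mstar x xi w om i j
        = poly (pullback x om i) 0 + (\<Sum>l\<le>j. w l * poly (pderiv (pullback x om i)) (xi l))"
      by (simp add: Mstar_def cweight_pderiv_pullback)
    moreover have "integral {cnode x xi i j..cnode x xi i (Suc j)} (poly (v i))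
        = (x (Suc i) - x i) * integral {xi j..xi (Suc j)} (poly (pullback x v i))"
      using integral_pullback[of x i "xi j" "xi (Suc j)" v] cells that xi_mono[of j]
      by (simp add: cnode_def)
    ultimately show ?thesis
      by simp
  qed
  then show ?thesis
    by (simp add: star_ip_def ref_star_ip_def sum_distrib_left)
qed

lemma degree_pullback_Vk: "Vk N k v \<Longrightarrow> i < N \<Longrightarrow> degree (pullback x v i) \<le> k"
  using degree_pullback_le[of x v i] by (auto simp: Vk_def)

lemma star_ip_commute: "Vk N k v \<Longrightarrow> Vk N k u \<Longrightarrow> star_ip N k x xi w v u = star_ip N k x xi w u v"
  unfolding star_ip_eq_sum by (intro sum.cong refl) (simp add: ref_star_ip_commute degree_pullback_Vk)

lemma Hstar_skew:
  assumes v: "Vk N k v" and om: "Vk N k om"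
  shows "Hstar N k x xi w \<beta> v om + Hstar N k x xi w \<beta> om v = - \<beta> * jump_ip N x v om"
proof -
  define P Q where "P = pullback x v" and "Q = pullback x om"
  define E where "E i = poly (P i) 0 * poly (Q i) 0" for i
  have "quad k xi w (poly (P i * pderiv (Q i))) + quad k xi w (poly (Q i * pderiv (P i)))
        + poly (P i) 1 * jump N x om i + poly (Q i) 1 * jump N x v i
      = (E (Suc i mod N) - E i) - jump N x v i * jump N x om i" if "i < N" for i
    using quad_pderiv_mult_symmetric[of "P i" "Q i"] degree_pullback_Vk[OF v that]
      degree_pullback_Vk[OF om that]
    by (simp add: P_def Q_def E_def jump_pullback algebra_simps)
  moreover have "Hstar N k x xi w \<beta> v om + Hstar N k x xi w \<beta> om v
      = \<beta> * (\<Sum>i<N. quad k xi w (poly (P i * pderiv (Q i))) + quad k xi w (poly (Q i * pderiv (P i)))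
        + poly (P i) 1 * jump N x om i + poly (Q i) 1 * jump N x v i)"
    unfolding Hstar_pullback P_def Q_def by (simp add: sum.distrib algebra_simps)
  ultimately have "Hstar N k x xi w \<beta> v om + Hstar N k x xi w \<beta> om v
      = \<beta> * (\<Sum>i<N. (E (Suc i mod N) - E i) - jump N x v i * jump N x om i)"
    by simp
  also have "\<dots> = \<beta> * ((\<Sum>i<N. E (Suc i mod N)) - (\<Sum>i<N. E i) - jump_ip N x v om)"
    by (simp add: sum_subtractf jump_ip_def)
  also have "(\<Sum>i<N. E (Suc i mod N)) = (\<Sum>i<N. E i)"
    using N_pos by (simp add: sum_lessThan_Suc_mod)
  finally show ?thesis
    by simp
qed

lemma cell_le_meshsize: "i < N \<Longrightarrow> x (Suc i) - x i \<le> meshsize N x"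
  unfolding meshsize_def by (intro Max_ge) auto

lemma meshsize_pos: "0 < meshsize N x"
  using cell_le_meshsize[of 0] cells N_pos by force

lemma L2_set_cell_norms_le:
  assumes u: "Vk N k u" and quasi: "\<forall>i<N. meshsize N x \<le> Cq * (x (Suc i) - x i)"
  shows "L2_set (\<lambda>i. sqrt (ref_star_ip k xi w (pullback x u i) (pullback x u i))) {..<N}
       \<le> sqrt (Cq / meshsize N x) * star_norm N k x xi w u"
proof -
  let ?r = "\<lambda>i. ref_star_ip k xi w (pullback x u i) (pullback x u i)"
  have nonneg: "0 \<le> ?r i" if "i < N" for i
    using ref_star_ip_nonneg[OF degree_pullback_Vk[OF u that]] .
  have "?r i \<le> Cq / meshsize N x * ((x (Suc i) - x i) * ?r i)" if "i < N" for i
  proof -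
    have "1 \<le> Cq / meshsize N x * (x (Suc i) - x i)"
      using quasi that meshsize_pos by (simp add: field_simps)
    from mult_right_mono[OF this nonneg[OF that]] show ?thesis
      by (simp add: mult.assoc)
  qed
  then have "(\<Sum>i<N. ?r i) \<le> (\<Sum>i<N. Cq / meshsize N x * ((x (Suc i) - x i) * ?r i))"
    by (intro sum_mono) simp
  moreover have "(\<Sum>i<N. (sqrt (?r i))\<^sup>2) = (\<Sum>i<N. ?r i)"
    using nonneg by simp
  ultimately have "(\<Sum>i<N. (sqrt (?r i))\<^sup>2) \<le> Cq / meshsize N x * star_ip N k x xi w u u"
    by (simp add: star_ip_eq_sum sum_distrib_left)
  then show ?thesis
    unfolding L2_set_def star_norm_def by (metis real_sqrt_le_mono real_sqrt_mult)
qed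

lemma Hstar_le:
  assumes K: "\<And>p j. degree p \<le> k \<Longrightarrow> j \<le> Suc k \<Longrightarrow>
      \<bar>poly p (xi j)\<bar> \<le> K * sqrt (ref_star_ip k xi w p p)
    \<and> \<bar>poly (pderiv p) (xi j)\<bar> \<le> K * sqrt (ref_star_ip k xi w p p)"
    and v: "Vk N k v" and om: "Vk N k om"
    and quasi: "\<forall>i<N. meshsize N x \<le> Cq * (x (Suc i) - x i)" and \<beta>: "\<beta> > 0"
  shows "Hstar N k x xi w \<beta> v om \<le> \<beta> * K\<^sup>2 * ((\<Sum>j\<le>Suc k. \<bar>w j\<bar>) + 2) * Cq / meshsize N x
           * star_norm N k x xi w v * star_norm N k x xi w om"
proof -
  define P Q where "P = pullback x v" and "Q = pullback x om"
  define a b where "a = (\<lambda>i. sqrt (ref_star_ip k xi w (P i) (P i)))"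
    and "b = (\<lambda>i. sqrt (ref_star_ip k xi w (Q i) (Q i)))"
  define W where "W = (\<Sum>j\<le>Suc k. \<bar>w j\<bar>)"
  have P: "\<bar>poly (P i) (xi j)\<bar> \<le> K * a i \<and> \<bar>poly (pderiv (P i)) (xi j)\<bar> \<le> K * a i"
    and Q: "\<bar>poly (Q i) (xi j)\<bar> \<le> K * b i \<and> \<bar>poly (pderiv (Q i)) (xi j)\<bar> \<le> K * b i"
    if "i < N" "j \<le> Suc k" for i j
    using K[OF degree_pullback_Vk[OF v that(1)] that(2)] K[OF degree_pullback_Vk[OF om that(1)] that(2)]
    by (simp_all add: P_def Q_def a_def b_def)
  have volume: "quad k xi w (poly (P i * pderiv (Q i))) \<le> W * K\<^sup>2 * (a i * b i)" if "i < N" for i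
  proof -
    have "quad k xi w (poly (P i * pderiv (Q i))) \<le> (\<Sum>j\<le>Suc k. \<bar>w j\<bar> * (K * a i * (K * b i)))"
      unfolding quad_def
    proof (intro sum_mono)
      fix j
      assume "j \<in> {..Suc k}"
      then have "\<bar>w j * poly (P i * pderiv (Q i)) (xi j)\<bar> \<le> \<bar>w j\<bar> * (K * a i * (K * b i))"
        using P[OF that, of j] Q[OF that, of j] by (auto intro!: abs_mult_le_of_abs_le)
      then show "w j * poly (P i * pderiv (Q i)) (xi j) \<le> \<bar>w j\<bar> * (K * a i * (K * b i))"
        by (meson abs_ge_self order_trans)
    qed
    also have "\<dots> = W * K\<^sup>2 * (a i * b i)"
      unfolding W_def sum_distrib_right[symmetric] by (simp add: power2_eq_square ac_simps)
    finally show ?thesis .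
  qed
  have flux: "poly (P i) 1 * jump N x om i \<le> K\<^sup>2 * (a i * b (Suc i mod N)) + K\<^sup>2 * (a i * b i)"
    if "i < N" for i
  proof -
    have "Suc i mod N < N"
      using N_pos by simp
    then have "\<bar>jump N x om i\<bar> \<le> K * b (Suc i mod N) + K * b i"
      using Q[of "Suc i mod N" 0] Q[OF that, of "Suc k"] xi_0 xi_Suc_k
      unfolding jump_pullback Q_def by (auto intro: order_trans[OF abs_triangle_ineq4])
    then have "\<bar>poly (P i) 1 * jump N x om i\<bar> \<le> K * a i * (K * b (Suc i mod N) + K * b i)"
      using P[OF that, of "Suc k"] xi_Suc_k by (auto intro!: abs_mult_le_of_abs_le)
    then show ?thesis
      by (simp add: power2_eq_square algebra_simps)
  qed
  have L2_shift: "L2_set (\<lambda>i. b (Suc i mod N)) {..<N} = L2_set b {..<N}"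
    unfolding L2_set_def using N_pos sum_lessThan_Suc_mod[of N "\<lambda>i. (b i)\<^sup>2"] by simp
  have sum_le: "(\<Sum>i<N. a i * f i) \<le> L2_set a {..<N} * L2_set f {..<N}" for f
    by (rule order_trans[OF abs_ge_self abs_sum_mult_le_L2_set])
  have "Hstar N k x xi w \<beta> v om
      \<le> \<beta> * ((\<Sum>i<N. W * K\<^sup>2 * (a i * b i))
           + (\<Sum>i<N. K\<^sup>2 * (a i * b (Suc i mod N)) + K\<^sup>2 * (a i * b i)))"
    unfolding Hstar_pullback P_def[symmetric] Q_def[symmetric] using volume flux \<beta>
    by (intro mult_left_mono add_mono sum_mono) auto
  also have "\<dots> = \<beta> * K\<^sup>2 * ((W + 1) * (\<Sum>i<N. a i * b i) + (\<Sum>i<N. a i * b (Suc i mod N)))"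
    by (simp add: sum.distrib sum_distrib_left algebra_simps)
  also have "\<dots> \<le> \<beta> * K\<^sup>2 * ((W + 1) * (L2_set a {..<N} * L2_set b {..<N}) + L2_set a {..<N} * L2_set b {..<N})"
    using sum_le[of b] sum_le[of "\<lambda>i. b (Suc i mod N)"] \<beta>
    by (intro mult_left_mono add_mono) (auto simp: L2_shift W_def)
  also have "\<dots> = \<beta> * K\<^sup>2 * (W + 2) * (L2_set a {..<N} * L2_set b {..<N})"
    by (simp add: algebra_simps)
  also have "\<dots> \<le> \<beta> * K\<^sup>2 * (W + 2) * ((sqrt (Cq / meshsize N x) * star_norm N k x xi w v)
      * (sqrt (Cq / meshsize N x) * star_norm N k x xi w om))"
    using L2_set_cell_norms_le[OF v quasi] L2_set_cell_norms_le[OF om quasi] \<beta>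
      order_trans[OF L2_set_nonneg L2_set_cell_norms_le[OF v quasi]]
    by (intro mult_left_mono mult_mono) (auto simp: a_def b_def P_def Q_def W_def)
  also have "\<dots> = \<beta> * K\<^sup>2 * (W + 2) * (sqrt (Cq / meshsize N x) * sqrt (Cq / meshsize N x))
      * star_norm N k x xi w v * star_norm N k x xi w om"
    by (simp only: ac_simps)
  also have "sqrt (Cq / meshsize N x) * sqrt (Cq / meshsize N x) = Cq / meshsize N x"
  proof -
    have "meshsize N x \<le> Cq * (x (Suc 0) - x 0)" and "0 < x (Suc 0) - x 0"
      using quasi cells N_pos by auto
    then have "Cq > 0"
      using meshsize_pos zero_less_mult_pos2[of Cq "x (Suc 0) - x 0"] by linarith
    then show ?thesis
      using meshsize_pos by simp
  qed
  finally show ?thesis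
    by (simp add: W_def)
qed

end

section \<open>The operator \<open>\<bbbD>\<^sup>*\<close>\<close>

locale dg_operator = dg_mesh +
  fixes \<tau> \<beta> :: real and D :: "(nat \<Rightarrow> real poly) \<Rightarrow> (nat \<Rightarrow> real poly)"
  assumes \<tau>_pos: "0 < \<tau>" and \<beta>_pos: "0 < \<beta>"
    and D: "\<forall>v. Vk N k v \<longrightarrow> Vk N k (D v) \<and>
      (\<forall>om. Vk N k om \<longrightarrow> star_ip N k x xi w (D v) om = \<tau> * Hstar N k x xi w \<beta> v om)"
begin

lemma Vk_D: "Vk N k v \<Longrightarrow> Vk N k (D v)"
  using D by blast

lemma star_ip_D: "Vk N k v \<Longrightarrow> Vk N k om \<Longrightarrow> star_ip N k x xi w (D v) om = \<tau> * Hstar N k x xi w \<beta> v om"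
  using D by blast

lemma D_skew:
  assumes v: "Vk N k v" and om: "Vk N k om"
  shows "star_ip N k x xi w (D v) om + star_ip N k x xi w v (D om) = - \<tau> * \<beta> * jump_ip N x v om"
proof -
  have "star_ip N k x xi w v (D om) = star_ip N k x xi w (D om) v"
    using star_ip_commute[OF v Vk_D[OF om]] .
  then have "star_ip N k x xi w (D v) om + star_ip N k x xi w v (D om)
      = \<tau> * (Hstar N k x xi w \<beta> v om + Hstar N k x xi w \<beta> om v)"
    using star_ip_D[OF v om] star_ip_D[OF om v] by (simp add: distrib_left)
  then show ?thesis
    by (simp add: Hstar_skew[OF v om])
qed

lemma D_double_sum_eq:
  assumes "\<forall>a<m. \<forall>b<m. \<theta> a b = \<theta> b a" and "\<forall>a<m. Vk N k (vs a)"
  shows "(\<Sum>a<m. \<Sum>b<m. \<theta> a b * star_ip N k x xi w (D (vs a)) (vs b))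
       = - (\<tau> * \<beta> / 2) * (\<Sum>a<m. \<Sum>b<m. \<theta> a b * jump_ip N x (vs a) (vs b))"
proof -
  have "star_ip N k x xi w (D (vs a)) (vs b) + star_ip N k x xi w (D (vs b)) (vs a)
      = - \<tau> * \<beta> * jump_ip N x (vs a) (vs b)" if "a \<in> {..<m}" "b \<in> {..<m}" for a b
  proof -
    have a: "Vk N k (vs a)" and b: "Vk N k (vs b)"
      using assms(2) that by auto
    show ?thesis
      using D_skew[OF a b] star_ip_commute[OF a Vk_D[OF b]] by simp
  qed
  then show ?thesis
    using double_sum_skew_part[where A="{..<m}" and c="- \<tau> * \<beta>"] assms(1) by simp
qed

lemma D_double_sum_nonpos:
  assumes "\<forall>c. 0 \<le> (\<Sum>a<m. \<Sum>b<m. \<theta> a b * c a * c b)"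
  shows "- (\<tau> * \<beta> / 2) * (\<Sum>a<m. \<Sum>b<m. \<theta> a b * jump_ip N x (vs a) (vs b)) \<le> 0"
proof -
  have "0 \<le> (\<Sum>a<m. \<Sum>b<m. \<theta> a b * jump_ip N x (vs a) (vs b))"
    unfolding jump_ip_def using assms by (intro psd_double_sum_gram_nonneg) blast
  then show ?thesis
    using \<tau>_pos \<beta>_pos by simp
qed

lemma D_le:
  assumes K: "\<And>p j. degree p \<le> k \<Longrightarrow> j \<le> Suc k \<Longrightarrow>
      \<bar>poly p (xi j)\<bar> \<le> K * sqrt (ref_star_ip k xi w p p)
    \<and> \<bar>poly (pderiv p) (xi j)\<bar> \<le> K * sqrt (ref_star_ip k xi w p p)"
    and quasi: "\<forall>i<N. meshsize N x \<le> Cq * (x (Suc i) - x i)"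
    and v: "Vk N k v" and om: "Vk N k om"
  shows "star_ip N k x xi w (D v) om \<le> \<beta> * K\<^sup>2 * ((\<Sum>j\<le>Suc k. \<bar>w j\<bar>) + 2) * Cq * \<tau>
           / meshsize N x * star_norm N k x xi w v * star_norm N k x xi w om"
proof -
  have "star_ip N k x xi w (D v) om = \<tau> * Hstar N k x xi w \<beta> v om"
    by (rule star_ip_D[OF v om])
  also have "\<dots> \<le> \<tau> * (\<beta> * K\<^sup>2 * ((\<Sum>j\<le>Suc k. \<bar>w j\<bar>) + 2) * Cq / meshsize N x
      * star_norm N k x xi w v * star_norm N k x xi w om)"
    using Hstar_le[OF K v om quasi \<beta>_pos] \<tau>_pos by (intro mult_left_mono) auto
  finally show ?thesis
    by (simp add: ac_simps)
qed

end

theorem proposition4p8: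
  fixes k :: nat and xi w :: "nat \<Rightarrow> real" and \<beta> Cq :: real
  assumes nodes: "valid_nodes k 0 1 xi"
    and S: "assumption_S k 0 1 xi w"
    and upwind: "w 0 = 0"
    and beta: "\<beta> > 0"
  shows "\<exists>C. \<forall>(N::nat) (x::nat \<Rightarrow> real) (\<tau>::real) (D::(nat \<Rightarrow> real poly) \<Rightarrow> (nat \<Rightarrow> real poly)).
     (1 \<le> N \<and> (\<forall>i<N. x i < x (Suc i))
      \<and> (\<forall>i<N. meshsize N x \<le> Cq * (x (Suc i) - x i)) \<and> 0 < \<tau>
      \<and> (\<forall>v. Vk N k v \<longrightarrow> Vk N k (D v) \<and>
             (\<forall>om. Vk N k om \<longrightarrow> star_ip N k x xi w (D v) om = \<tau> * Hstar N k x xi w \<beta> v om)))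
     \<longrightarrow>
     (\<forall>v om. Vk N k v \<and> Vk N k om \<longrightarrow>
        star_ip N k x xi w (D v) om + star_ip N k x xi w v (D om) = - \<tau> * \<beta> * jump_ip N x v om)
   \<and> (\<forall>(m::nat) (\<theta>::nat \<Rightarrow> nat \<Rightarrow> real) (vs::nat \<Rightarrow> nat \<Rightarrow> real poly).
        (\<forall>a<m. \<forall>b<m. \<theta> a b = \<theta> b a)
        \<and> (\<forall>c::nat \<Rightarrow> real. 0 \<le> (\<Sum>a<m. \<Sum>b<m. \<theta> a b * c a * c b))
        \<and> (\<forall>a<m. Vk N k (vs a)) \<longrightarrow>
        (\<Sum>a<m. \<Sum>b<m. \<theta> a b * star_ip N k x xi w (D (vs a)) (vs b))
          = - (\<tau> * \<beta> / 2) * (\<Sum>a<m. \<Sum>b<m. \<theta> a b * jump_ip N x (vs a) (vs b))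
        \<and> - (\<tau> * \<beta> / 2) * (\<Sum>a<m. \<Sum>b<m. \<theta> a b * jump_ip N x (vs a) (vs b)) \<le> 0)
   \<and> (\<forall>v om. Vk N k v \<and> Vk N k om \<longrightarrow>
        star_ip N k x xi w (D v) om
          \<le> C * \<tau> / meshsize N x * star_norm N k x xi w v * star_norm N k x xi w om)"
proof -
  interpret quadrature_S k xi w
    using nodes S by unfold_locales
  obtain K where K: "\<And>p j. degree p \<le> k \<Longrightarrow> j \<le> Suc k \<Longrightarrow>
      \<bar>poly p (xi j)\<bar> \<le> K * sqrt (ref_star_ip k xi w p p)
    \<and> \<bar>poly (pderiv p) (xi j)\<bar> \<le> K * sqrt (ref_star_ip k xi w p p)"
    using node_values_le_ref_star_norm by blast
  define C where "C = \<beta> * K\<^sup>2 * ((\<Sum>j\<le>Suc k. \<bar>w j\<bar>) + 2) * Cq"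
  show ?thesis
  proof (intro exI[of _ C] allI impI, goal_cases)
    case (1 N x \<tau> D)
    then interpret dg_operator k xi w N x \<tau> \<beta> D
      using beta by unfold_locales auto
    have quasi: "\<forall>i<N. meshsize N x \<le> Cq * (x (Suc i) - x i)"
      using 1 by blast
    show ?case
      unfolding C_def
      by (intro conjI allI impI; elim conjE)
        (blast intro: D_skew D_double_sum_eq D_double_sum_nonpos D_le[OF K quasi])+
  qed
qed

end
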